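(* As $n\to\infty$, \[ n^2\Big(9\log2-\frac92\log3\Big)+O(n\log n)\;\ge\;\log K_n(n,n,\ldots,n,-n^2)\;\ge\;n^2\log2-\frac32n\log n+O(n). \]
   Context: $K_n(\bm{N})$, for $\bm{N}\in\mathbb{Z}^{n+1}$ with zero sum, is the number of integer vectors $(f_{ij})_{0\le i<j\le n}\in\mathbb{Z}_{\ge0}^{\binom{n+1}{2}}$ with $\sum_{j>i} f_{ij}-\sum_{k<i} f_{ki}=N_i$ for every $i$. Here $(n,\ldots,n,-n^2)\in\mathbb{Z}^{n+1}$. $\log$ is the natural logarithm. *)

theory Defs
  imports Complex_Main
begin

text \<open>Vectors are encoded as functions vanishing outside the index set.\<close>
definition kostant :: "nat \<Rightarrow> (nat \<Rightarrow> int) \<Rightarrow> nat" where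
  "kostant n N = card {f :: nat \<Rightarrow> nat \<Rightarrow> nat.
     (\<forall>i j. \<not> (i < j \<and> j \<le> n) \<longrightarrow> f i j = 0) \<and>
     (\<forall>i\<le>n. (\<Sum>j\<in>{i<..n}. int (f i j)) - (\<Sum>k<i. int (f k i)) = N i)}"

definition specialN :: "nat \<Rightarrow> nat \<Rightarrow> int" where
  "specialN n i = (if i < n then int n else - ((int n) ^ 2))"

end

theory Submission
  imports Defs "HOL-Library.FuncSet" "HOL-Analysis.Complex_Transcendental" "HOL-Real_Asymp.Real_Asymp"
begin

text \<open>
  Upper bound.  For a strictly increasing potential x, the cost of a flow f, i.e. the sum of
  f i j * (x i - x j) over all edges, depends only on its net flow N.  Summing geometric series
  over the entries therefore gives K(N) * exp <x, N> <= prod over i < j of 1 / (1 - exp (x i - x j)).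
  For x i = ln (i + 1) / 2 the logarithm of the product is a sum of left Riemann sums of
  psi t = - ln (1 - sqrt t), whose integral over [0, 1] is 3/2; with - <x, N> <= n (n + 1) / 2
  this gives ln K <= 5/4 n^2 + O(n log n), and 5/4 < 9 ln 2 - 9/2 ln 3.

  Lower bound.  Letting each vertex i < n split its own supply n arbitrarily among the edges
  (i, j) with j < n, and sending everything else straight to the sink n, gives
  K >= prod over i < n of C(n + i, n).  As C(n + a + b, n) <= C(n + a, n) * C(n + b, n), pairing
  the factors i and n - 1 - i bounds the square of this product below by
  C(2n - 1, n)^n >= (4^n / 4n)^n.
\<close>

section \<open>Flows and their generating function\<close>

definition kostant_flows :: "nat \<Rightarrow> (nat \<Rightarrow> int) \<Rightarrow> (nat \<Rightarrow> nat \<Rightarrow> nat) set" where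
  "kostant_flows n N = {f. (\<forall>i j. \<not> (i < j \<and> j \<le> n) \<longrightarrow> f i j = 0) \<and>
     (\<forall>i\<le>n. (\<Sum>j\<in>{i<..n}. int (f i j)) - (\<Sum>k<i. int (f k i)) = N i)}"

lemma kostant_eq_card_kostant_flows: "kostant n N = card (kostant_flows n N)"
  by (simp add: kostant_def kostant_flows_def)

lemma kostant_flows_vanish:
  "f \<in> kostant_flows n N \<Longrightarrow> \<not> (i < j \<and> j \<le> n) \<Longrightarrow> f i j = 0"
  by (simp add: kostant_flows_def)

lemma kostant_flows_balance:
  "f \<in> kostant_flows n N \<Longrightarrow> i \<le> n \<Longrightarrow>
    (\<Sum>j\<in>{i<..n}. int (f i j)) - (\<Sum>k<i. int (f k i)) = N i"
  by (simp add: kostant_flows_def)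

definition pos_roots :: "nat \<Rightarrow> (nat \<times> nat) set" where
  "pos_roots n = {(i, j). i < j \<and> j \<le> n}"

lemma pos_roots_eq_Sigma: "pos_roots n = (SIGMA i:{..n}. {i<..n})"
  by (auto simp: pos_roots_def)

lemma finite_pos_roots [simp]: "finite (pos_roots n)"
  by (simp add: pos_roots_eq_Sigma)

lemma sum_pos_roots_rows: "(\<Sum>(i, j)\<in>pos_roots n. g i j) = (\<Sum>i\<le>n. \<Sum>j\<in>{i<..n}. g i j)"
  by (simp add: pos_roots_eq_Sigma sum.Sigma)

lemma sum_pos_roots_cols: "(\<Sum>(i, j)\<in>pos_roots n. g i j) = (\<Sum>j\<le>n. \<Sum>i<j. g i j)"
proof -
  have "pos_roots n = prod.swap ` (SIGMA j:{..n}. {..<j})"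
    by (auto simp: pos_roots_def image_iff)
  then show ?thesis
    by (simp add: sum.reindex sum.Sigma case_prod_beta)
qed

lemma kostant_flows_outflow_le:
  assumes f: "f \<in> kostant_flows n N" and B: "\<forall>i\<le>n. N i \<le> int B"
  shows "i \<le> n \<Longrightarrow> (\<Sum>j\<in>{i<..n}. f i j) \<le> B * 2 ^ i"
proof (induction i rule: less_induct)
  case (less i)
  have "int (\<Sum>j\<in>{i<..n}. f i j) = N i + int (\<Sum>k<i. f k i)"
    using kostant_flows_balance[OF f less.prems] by simp
  moreover have "N i \<le> int B"
    using B less.prems by simp
  ultimately have "(\<Sum>j\<in>{i<..n}. f i j) \<le> B + (\<Sum>k<i. f k i)"
    by linarith
  also have "(\<Sum>k<i. f k i) \<le> (\<Sum>k<i. B * 2 ^ k)"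
  proof (rule sum_mono)
    fix k assume k: "k \<in> {..<i}"
    have "f k i \<le> (\<Sum>j\<in>{k<..n}. f k j)"
      using k less.prems by (intro member_le_sum) auto
    also have "\<dots> \<le> B * 2 ^ k"
      using k less.prems by (intro less.IH) auto
    finally show "f k i \<le> B * 2 ^ k" .
  qed
  also have "B + (\<Sum>k<i. B * 2 ^ k) = B * 2 ^ i"
    by (induction i) (simp_all add: algebra_simps)
  finally show ?case by simp
qed

lemma kostant_flows_le:
  assumes f: "f \<in> kostant_flows n N" and B: "\<forall>i\<le>n. N i \<le> int B"
  shows "f i j \<le> B * 2 ^ n"
proof (cases "i < j \<and> j \<le> n")
  case True
  then have "f i j \<le> (\<Sum>j\<in>{i<..n}. f i j)"
    by (intro member_le_sum) auto
  also have "\<dots> \<le> B * 2 ^ i"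
    using True by (intro kostant_flows_outflow_le[OF f B]) simp
  also have "\<dots> \<le> B * 2 ^ n"
    using True by simp
  finally show ?thesis .
qed (simp add: kostant_flows_vanish[OF f])

lemma inj_on_restrict_kostant_flows:
  "inj_on (\<lambda>f. restrict (case_prod f) (pos_roots n)) (kostant_flows n N)"
proof (rule inj_onI, intro ext)
  fix f g i j
  assume f: "f \<in> kostant_flows n N" and g: "g \<in> kostant_flows n N"
    and eq: "restrict (case_prod f) (pos_roots n) = restrict (case_prod g) (pos_roots n)"
  show "f i j = g i j"
  proof (cases "(i, j) \<in> pos_roots n")
    case True
    then show ?thesis using fun_cong[OF eq, of "(i, j)"] by simp
  qed (simp add: pos_roots_def kostant_flows_vanish[OF f] kostant_flows_vanish[OF g])
qed

lemma restrict_kostant_flows_subset_PiE: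
  assumes "\<forall>i\<le>n. N i \<le> int B"
  shows "(\<lambda>f. restrict (case_prod f) (pos_roots n)) ` kostant_flows n N
           \<subseteq> (\<Pi>\<^sub>E e\<in>pos_roots n. {..B * 2 ^ n})"
  using kostant_flows_le[OF _ assms] by auto

lemma ex_nat_upper_bound:
  fixes N :: "nat \<Rightarrow> int"
  shows "\<exists>B. \<forall>i\<le>n. N i \<le> int B"
proof
  show "\<forall>i\<le>n. N i \<le> int (\<Sum>k\<le>n. nat (N k))"
  proof (intro allI impI)
    fix i assume "i \<le> n"
    then have "nat (N i) \<le> (\<Sum>k\<le>n. nat (N k))"
      by (intro member_le_sum) auto
    then show "N i \<le> int (\<Sum>k\<le>n. nat (N k))" by linarith
  qed
qed

lemma finite_kostant_flows: "finite (kostant_flows n N)"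
proof -
  obtain B where "\<forall>i\<le>n. N i \<le> int B"
    using ex_nat_upper_bound by blast
  then show ?thesis
    by (intro finite_imageD[OF _ inj_on_restrict_kostant_flows] finite_PiE
          finite_subset[OF restrict_kostant_flows_subset_PiE]) auto
qed

lemma kostant_flows_potential:
  fixes x :: "nat \<Rightarrow> real"
  assumes f: "f \<in> kostant_flows n N"
  shows "(\<Sum>(i, j)\<in>pos_roots n. f i j * (x i - x j)) = (\<Sum>i\<le>n. x i * N i)"
proof -
  have "(\<Sum>(i, j)\<in>pos_roots n. f i j * (x i - x j))
      = (\<Sum>(i, j)\<in>pos_roots n. f i j * x i) - (\<Sum>(i, j)\<in>pos_roots n. f i j * x j)"
    by (simp add: algebra_simps sum_subtractf case_prod_beta)
  also have "\<dots> = (\<Sum>i\<le>n. x i * (\<Sum>j\<in>{i<..n}. f i j)) - (\<Sum>i\<le>n. x i * (\<Sum>k<i. f k i))"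
    using sum_pos_roots_rows[of "\<lambda>i j. f i j * x i" n]
      sum_pos_roots_cols[of "\<lambda>i j. f i j * x j" n]
    by (simp add: sum_distrib_left mult.commute)
  also have "\<dots> = (\<Sum>i\<le>n. x i * ((\<Sum>j\<in>{i<..n}. real (f i j)) - (\<Sum>k<i. real (f k i))))"
    by (simp add: sum_subtractf right_diff_distrib)
  also have "\<dots> = (\<Sum>i\<le>n. x i * N i)"
  proof (rule sum.cong[OF refl])
    fix i assume "i \<in> {..n}"
    then have "real_of_int ((\<Sum>j\<in>{i<..n}. int (f i j)) - (\<Sum>k<i. int (f k i))) = N i"
      using kostant_flows_balance[OF f] by simp
    then show "x i * ((\<Sum>j\<in>{i<..n}. real (f i j)) - (\<Sum>k<i. real (f k i))) = x i * N i"
      by simp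
  qed
  finally show ?thesis .
qed

lemma kostant_mult_exp_le:
  fixes x :: "nat \<Rightarrow> real"
  assumes incr: "\<And>i j. i < j \<Longrightarrow> j \<le> n \<Longrightarrow> x i < x j"
  shows "kostant n N * exp (\<Sum>i\<le>n. x i * N i)
           \<le> (\<Prod>(i, j)\<in>pos_roots n. 1 / (1 - exp (x i - x j)))"
proof -
  obtain B where B: "\<forall>i\<le>n. N i \<le> int B"
    using ex_nat_upper_bound by blast
  define q :: "nat \<times> nat \<Rightarrow> real" where "q = (\<lambda>(i, j). exp (x i - x j))"
  define v :: "(nat \<Rightarrow> nat \<Rightarrow> nat) \<Rightarrow> nat \<times> nat \<Rightarrow> nat"
    where "v = (\<lambda>f. restrict (case_prod f) (pos_roots n))"
  have q: "0 < q e" "q e < 1" if "e \<in> pos_roots n" for e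
    using that incr by (auto simp: q_def pos_roots_def)
  have "kostant n N * exp (\<Sum>i\<le>n. x i * N i)
      = (\<Sum>f\<in>kostant_flows n N. exp (\<Sum>(i, j)\<in>pos_roots n. f i j * (x i - x j)))"
    by (simp add: kostant_eq_card_kostant_flows kostant_flows_potential)
  also have "\<dots> = (\<Sum>f\<in>kostant_flows n N. \<Prod>e\<in>pos_roots n. q e ^ v f e)"
    by (intro sum.cong refl)
       (simp add: exp_sum exp_of_nat_mult q_def v_def case_prod_beta)
  also have "\<dots> = (\<Sum>g\<in>v ` kostant_flows n N. \<Prod>e\<in>pos_roots n. q e ^ g e)"
    unfolding v_def by (rule sum.reindex[OF inj_on_restrict_kostant_flows, symmetric, unfolded comp_def])
  also have "\<dots> \<le> (\<Sum>g\<in>(\<Pi>\<^sub>E e\<in>pos_roots n. {..B * 2 ^ n}). \<Prod>e\<in>pos_roots n. q e ^ g e)"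
    using restrict_kostant_flows_subset_PiE[OF B] q(1)
    by (intro sum_mono2 finite_PiE prod_nonneg) (auto simp: v_def less_imp_le)
  also have "\<dots> = (\<Prod>e\<in>pos_roots n. \<Sum>m\<le>B * 2 ^ n. q e ^ m)"
    by (rule prod_sum_PiE[symmetric]) auto
  also have "\<dots> \<le> (\<Prod>e\<in>pos_roots n. 1 / (1 - q e))"
  proof (intro prod_mono conjI)
    fix e assume e: "e \<in> pos_roots n"
    show "0 \<le> (\<Sum>m\<le>B * 2 ^ n. q e ^ m)"
      using q(1)[OF e] by (intro sum_nonneg) simp
    have "(\<Sum>m\<le>B * 2 ^ n. q e ^ m) \<le> (\<Sum>m. q e ^ m)"
      using q[OF e] by (intro sum_le_suminf summable_geometric) auto
    then show "(\<Sum>m\<le>B * 2 ^ n. q e ^ m) \<le> 1 / (1 - q e)"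
      using q[OF e] by (simp add: suminf_geometric)
  qed
  finally show ?thesis
    by (simp add: q_def case_prod_beta)
qed

section \<open>Left Riemann sums of psi\<close>

lemma left_riemann_sum_le_antiderivative:
  fixes f F :: "real \<Rightarrow> real"
  assumes mono: "mono_on {a..b} f" and cont: "continuous_on {a..b} F"
    and deriv: "\<And>t. a < t \<Longrightarrow> t < b \<Longrightarrow> (F has_real_derivative f t) (at t)"
    and h: "0 < h" and K: "a + real K * h \<le> b"
  shows "(\<Sum>k<K. f (a + real k * h)) * h \<le> F (a + real K * h) - F a"
  using K
proof (induction K)
  case (Suc K)
  define l where "l = a + K * h"
  define r where "r = a + Suc K * h"
  have lr: "a \<le> l" "l < r" "r \<le> b"
    using Suc.prems h by (simp_all add: l_def r_def algebra_simps)
  have "F differentiable (at t)" if "l < t" "t < r" for t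
    using deriv[of t] that lr real_differentiable_def by force
  then obtain c z where z: "l < z" "z < r" "(F has_real_derivative c) (at z)"
      and mvt: "F r - F l = (r - l) * c"
    using MVT[OF \<open>l < r\<close> continuous_on_subset[OF cont]] lr by auto
  have "c = f z"
    using DERIV_unique[OF z(3) deriv] z lr by simp
  moreover have "f l \<le> f z"
    using z lr by (intro mono_onD[OF mono]) auto
  moreover have "r - l = h"
    by (simp add: l_def r_def algebra_simps)
  ultimately have "f l * h \<le> F r - F l"
    using mvt h by (simp add: mult.commute mult_right_mono)
  moreover have "(\<Sum>k<K. f (a + k * h)) * h \<le> F l - F a"
    using Suc.IH lr unfolding l_def by simp
  ultimately show ?case
    by (simp add: l_def r_def algebra_simps)
qed simp

definition psi :: "real \<Rightarrow> real" where
  "psi t = - ln (1 - sqrt t)"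

text \<open>An antiderivative of psi on (0,1); its limit 3/2 at 1 is the integral of psi over [0,1].\<close>

definition Psi :: "real \<Rightarrow> real" where
  "Psi t = (1 - t) * ln (1 - sqrt t) + sqrt t + t / 2"

lemma psi_0 [simp]: "psi 0 = 0"
  by (simp add: psi_def)

lemma Psi_0 [simp]: "Psi 0 = 0"
  by (simp add: Psi_def)

lemma mono_on_psi: "mono_on {0..<1} psi"
  by (intro mono_onI) (simp add: psi_def)

lemma continuous_on_Psi: "continuous_on {0..<1} Psi"
  unfolding Psi_def by (intro continuous_intros) auto

lemma has_real_derivative_Psi:
  assumes "0 < t" "t < 1"
  shows "(Psi has_real_derivative psi t) (at t)"
proof -
  have s: "0 < sqrt t" "sqrt t < 1"
    using assms by auto
  have deriv: "(Psi has_real_derivative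
      - 1 * ln (1 - sqrt t)
        + ((1 - t) * (- (inverse (sqrt t) / 2) / (1 - sqrt t)) + inverse (sqrt t) / 2 + 1 / 2))
      (at t)"
    unfolding Psi_def using assms s
    by (auto intro!: derivative_eq_intros) (simp_all add: algebra_simps)
  have "(1 - s\<^sup>2) * (- (inverse s / 2) / (1 - s)) + inverse s / 2 + 1 / 2 = 0"
    if "0 < s" "s < 1" for s :: real
    using that by (simp add: field_simps power2_eq_square)
  from this[OF s]
  have vanish: "(1 - t) * (- (inverse (sqrt t) / 2) / (1 - sqrt t)) + inverse (sqrt t) / 2 + 1 / 2 = 0"
    using assms by simp
  show ?thesis
    using deriv unfolding vanish psi_def by simp
qed

lemma Psi_le:
  assumes "0 \<le> t" "t < 1"
  shows "Psi t \<le> 3 / 2"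
proof -
  have "(1 - t) * ln (1 - sqrt t) \<le> 0"
    using assms by (intro mult_nonneg_nonpos) auto
  moreover have "sqrt t \<le> 1"
    using assms by simp
  ultimately show ?thesis
    unfolding Psi_def using assms by linarith
qed

lemma psi_one_minus_inverse_le:
  fixes m :: real
  assumes "1 \<le> m"
  shows "psi (1 - 1 / m) \<le> ln (2 * m)"
proof -
  have "sqrt (1 - 1 / m) \<le> 1 - 1 / (2 * m)"
    using assms by (intro real_le_lsqrt) (simp_all add: power2_eq_square field_simps)
  then have "- ln (1 - sqrt (1 - 1 / m)) \<le> - ln (1 / (2 * m))"
    using assms by (simp add: ln_le_cancel_iff)
  then show ?thesis
    using assms by (simp add: psi_def ln_div)
qed

lemma sum_psi_le:
  fixes m :: nat
  assumes "1 \<le> m"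
  shows "(\<Sum>k<m. psi (real k / real m)) \<le> 3 / 2 * real m + ln (2 * real m)"
proof -
  define b where "b = real (m - 1) / m"
  have b: "0 \<le> b" "b < 1" "b = 1 - 1 / m"
    using assms by (auto simp: b_def of_nat_diff field_simps)
  have bK: "0 + real (m - 1) * (1 / m) = b"
    by (simp add: b_def)
  have "(\<Sum>k<m - 1. psi (0 + real k * (1 / m))) * (1 / m)
      \<le> Psi (0 + real (m - 1) * (1 / m)) - Psi 0"
  proof (rule left_riemann_sum_le_antiderivative[where b = b])
    show "mono_on {0..b} psi"
      using b(2) by (intro mono_on_subset[OF mono_on_psi]) auto
    show "continuous_on {0..b} Psi"
      using b(2) by (intro continuous_on_subset[OF continuous_on_Psi]) auto
    show "(Psi has_real_derivative psi t) (at t)" if "0 < t" "t < b" for t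
      using that b(2) by (intro has_real_derivative_Psi) auto
    show "0 + real (m - 1) * (1 / m) \<le> b"
      by (simp only: bK)
  qed (use assms in simp)
  also have "\<dots> \<le> 3 / 2"
    unfolding bK using Psi_le[OF b(1,2)] by simp
  finally have "(\<Sum>k<m - 1. psi (k / m)) / m \<le> 3 / 2"
    by (simp add: sum_divide_distrib)
  then have "(\<Sum>k<m - 1. psi (k / m)) \<le> 3 / 2 * m"
    using assms by (simp add: divide_le_eq)
  moreover have "psi b \<le> ln (2 * real m)"
    using psi_one_minus_inverse_le[of m] assms b(3) by simp
  moreover have "(\<Sum>k<m. psi (k / m)) = (\<Sum>k<Suc (m - 1). psi (k / m))"
    using assms by simp
  then have "(\<Sum>k<m. psi (k / m)) = (\<Sum>k<m - 1. psi (k / m)) + psi b"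
    by (simp add: b_def)
  ultimately show ?thesis
    by linarith
qed

section \<open>The upper bound\<close>

lemma power_div_fact_le_exp:
  fixes x :: real
  assumes "0 \<le> x"
  shows "x ^ n / fact n \<le> exp x"
proof -
  have "(\<Sum>k\<in>{n}. x ^ k /\<^sub>R fact k) \<le> (\<Sum>k. x ^ k /\<^sub>R fact k)"
    using assms by (intro sum_le_suminf summable_exp_generic) auto
  then show ?thesis
    by (simp add: exp_def divide_inverse_commute)
qed

lemma ln_fact_eq_sum: "ln (fact n :: real) = (\<Sum>i<n. ln (real i + 1))"
proof (induction n)
  case (Suc n)
  have "ln (fact (Suc n) :: real) = ln (real n + 1) + ln (fact n)"
    by (simp add: ln_mult add.commute)
  then show ?case
    using Suc by simp
qed simp

lemma ln_power_div_fact_le: "ln ((real n + 1) ^ n / fact n) \<le> real n + 1"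
proof -
  have "(real n + 1) ^ n / fact n = (real n + 1) ^ Suc n / fact (Suc n)"
    by (simp add: divide_simps)
  also have "\<dots> \<le> exp (real n + 1)"
    by (intro power_div_fact_le_exp) simp
  finally show ?thesis
    using ln_le_cancel_iff[of "(real n + 1) ^ n / fact n" "exp (real n + 1)"] by simp
qed

lemma specialN_potential_ge:
  "- (real n * (real n + 1) / 2) \<le> (\<Sum>i\<le>n. ln (real i + 1) / 2 * specialN n i)"
proof -
  have "(\<Sum>i\<le>n. ln (real i + 1) / 2 * specialN n i)
      = (\<Sum>i<n. ln (real i + 1) / 2 * n) - ln (real n + 1) / 2 * (real n)\<^sup>2"
    by (simp add: lessThan_Suc_atMost[symmetric] specialN_def)
  also have "\<dots> = - (real n / 2 * ln ((real n + 1) ^ n / fact n))"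
    by (simp add: ln_div ln_realpow ln_fact_eq_sum power2_eq_square
        sum_distrib_left sum_divide_distrib[symmetric] algebra_simps)
  also have "- (real n * (real n + 1) / 2) \<le> \<dots>"
    using ln_power_div_fact_le[of n] by (simp add: mult_left_mono)
  finally show ?thesis .
qed

lemma sum_pos_roots_psi_le:
  "(\<Sum>(i, j)\<in>pos_roots n. psi ((real i + 1) / (real j + 1)))
     \<le> 3 / 4 * (real n + 1) * (real n + 2) + (real n + 1) * ln (2 * (real n + 1))"
proof -
  have "(\<Sum>(i, j)\<in>pos_roots n. psi ((real i + 1) / (real j + 1)))
      = (\<Sum>j\<le>n. \<Sum>i<j. psi ((real i + 1) / (real j + 1)))"
    by (rule sum_pos_roots_cols)
  also have "\<dots> \<le> (\<Sum>j\<le>n. 3 / 2 * (real j + 1) + ln (2 * (real n + 1)))"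
  proof (rule sum_mono)
    fix j assume "j \<in> {..n}"
    have "(\<Sum>i<j. psi ((real i + 1) / (real j + 1))) = (\<Sum>k<Suc j. psi (k / real (Suc j)))"
      by (subst sum.lessThan_Suc_shift) (simp add: add.commute)
    also have "\<dots> \<le> 3 / 2 * real (Suc j) + ln (2 * real (Suc j))"
      by (rule sum_psi_le) simp
    also have "\<dots> \<le> 3 / 2 * (real j + 1) + ln (2 * (real n + 1))"
      using \<open>j \<in> {..n}\<close> by (simp add: add.commute)
    finally show "(\<Sum>i<j. psi ((real i + 1) / (real j + 1)))
        \<le> 3 / 2 * (real j + 1) + ln (2 * (real n + 1))" .
  qed
  also have "\<dots> = (\<Sum>j\<le>n. 3 / 2 * (real j + 1)) + (real n + 1) * ln (2 * (real n + 1))"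
    by (simp add: sum.distrib)
  also have "(\<Sum>j\<le>n. 3 / 2 * (real j + 1)) = 3 / 4 * (real n + 1) * (real n + 2)"
    by (induction n) (simp_all add: field_simps)
  finally show ?thesis .
qed

lemma ln_kostant_specialN_le:
  "ln (kostant n (specialN n))
     \<le> 3 / 4 * (real n + 1) * (real n + 2) + real n * (real n + 1) / 2
        + (real n + 1) * ln (2 * (real n + 1))"
proof -
  define x :: "nat \<Rightarrow> real" where "x i = ln (real i + 1) / 2" for i
  define S where "S = (\<Sum>(i, j)\<in>pos_roots n. psi ((real i + 1) / (real j + 1)))"
  have factor: "1 / (1 - exp (x i - x j)) = exp (psi ((real i + 1) / (real j + 1)))"
    if "(i, j) \<in> pos_roots n" for i j
  proof -
    have "exp (x i - x j) = sqrt ((real i + 1) / (real j + 1))"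
      by (simp add: x_def exp_diff real_sqrt_divide flip: ln_sqrt)
    moreover have "sqrt ((real i + 1) / (real j + 1)) < 1"
      using that by (simp add: pos_roots_def)
    ultimately show ?thesis
      by (simp add: psi_def exp_minus inverse_eq_divide)
  qed
  have "kostant n (specialN n) * exp (\<Sum>i\<le>n. x i * specialN n i)
      \<le> (\<Prod>(i, j)\<in>pos_roots n. 1 / (1 - exp (x i - x j)))"
    by (rule kostant_mult_exp_le) (simp add: x_def)
  also have "\<dots> = exp S"
    by (simp add: S_def exp_sum case_prod_beta factor cong: prod.cong)
  finally have bound: "kostant n (specialN n) * exp (\<Sum>i\<le>n. x i * specialN n i) \<le> exp S" .
  show ?thesis
  proof (cases "kostant n (specialN n) = 0")
    case False
    then have "ln (kostant n (specialN n)) + (\<Sum>i\<le>n. x i * specialN n i) \<le> S"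
      using ln_le_cancel_iff[THEN iffD2, OF _ _ bound] by (simp add: ln_mult)
    then show ?thesis
      using specialN_potential_ge[of n] sum_pos_roots_psi_le[of n] by (simp add: S_def x_def)
  qed (simp add: add_nonneg_nonneg)
qed

section \<open>The lower bound\<close>

definition bounded_sum_funs :: "nat set \<Rightarrow> nat \<Rightarrow> (nat \<Rightarrow> nat) set" where
  "bounded_sum_funs J B = {h. (\<forall>j. j \<notin> J \<longrightarrow> h j = 0) \<and> sum h J \<le> B}"

lemma bounded_sum_funs_insert:
  assumes "x \<notin> J" "finite J"
  shows "bounded_sum_funs (insert x J) B = (\<Union>v\<le>B. (\<lambda>h. h(x := v)) ` bounded_sum_funs J (B - v))"
proof (intro equalityI subsetI)
  fix h assume h: "h \<in> bounded_sum_funs (insert x J) B"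
  have "sum (h(x := 0)) J = sum h J"
    using assms by (intro sum.cong) auto
  then have "h(x := 0) \<in> bounded_sum_funs J (B - h x)" "h x \<le> B"
    using h assms by (auto simp: bounded_sum_funs_def)
  then show "h \<in> (\<Union>v\<le>B. (\<lambda>h. h(x := v)) ` bounded_sum_funs J (B - v))"
    by (intro UN_I[of "h x"] image_eqI[of _ _ "h(x := 0)"]) auto
next
  fix g assume "g \<in> (\<Union>v\<le>B. (\<lambda>h. h(x := v)) ` bounded_sum_funs J (B - v))"
  then obtain v h where "v \<le> B" "h \<in> bounded_sum_funs J (B - v)" "g = h(x := v)"
    by blast
  moreover have "sum (h(x := v)) J = sum h J"
    using assms by (intro sum.cong) auto
  ultimately show "g \<in> bounded_sum_funs (insert x J) B"
    using assms by (auto simp: bounded_sum_funs_def)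
qed

lemma card_bounded_sum_funs:
  "finite J \<Longrightarrow> card (bounded_sum_funs J B) = (B + card J) choose B"
proof (induction J arbitrary: B rule: finite_induct)
  case empty
  have "bounded_sum_funs {} B = {\<lambda>_. 0}"
    by (auto simp: bounded_sum_funs_def)
  then show ?case
    by simp
next
  case (insert x J)
  let ?A = "\<lambda>v. (\<lambda>h. h(x := v)) ` bounded_sum_funs J (B - v)"
  have inj: "inj_on (\<lambda>h. h(x := v)) (bounded_sum_funs J (B - v))" for v
  proof (rule inj_onI)
    fix g h
    assume "g \<in> bounded_sum_funs J (B - v)" "h \<in> bounded_sum_funs J (B - v)"
      and "g(x := v) = h(x := v)"
    moreover from this(1,2) have "g x = 0" "h x = 0"
      using insert.hyps by (auto simp: bounded_sum_funs_def)
    ultimately show "g = h"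
      by (metis fun_upd_triv fun_upd_upd)
  qed
  have "finite (bounded_sum_funs J (B - v))" for v
    using insert.IH[of "B - v"] by (intro card_ge_0_finite) simp
  then have "card (bounded_sum_funs (insert x J) B) = (\<Sum>v\<le>B. card (?A v))"
    unfolding bounded_sum_funs_insert[OF insert.hyps(2,1)]
    by (intro card_UN_disjoint) (auto dest: fun_cong[of _ _ x])
  also have "\<dots> = (\<Sum>v\<le>B. (card J + (B - v)) choose (B - v))"
    using insert.IH by (simp add: card_image[OF inj] add.commute)
  also have "\<dots> = (\<Sum>u\<le>B. (card J + u) choose u)"
    using sum.atLeastAtMost_rev[of "\<lambda>u. (card J + u) choose u" 0 B] by (simp add: atMost_atLeast0)
  also have "\<dots> = (B + card (insert x J)) choose B"
    by (subst sum_choose_lower) (simp add: insert.hyps add.commute)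
  finally show ?case .
qed

text \<open>Vertex i < n sends G i j to each j < n and the rest of its supply and inflow to the sink n;
  the subtraction does not truncate since \<open>G i\<close> sums to at most n.\<close>

definition sink_flow :: "nat \<Rightarrow> (nat \<Rightarrow> nat \<Rightarrow> nat) \<Rightarrow> nat \<Rightarrow> nat \<Rightarrow> nat" where
  "sink_flow n G i j =
     (if i < n \<and> j < n then G i j
      else if i < n \<and> j = n then n + (\<Sum>k<i. G k i) - (\<Sum>l\<in>{i<..<n}. G i l)
      else 0)"

lemma sink_flow_in_kostant_flows:
  assumes G: "G \<in> (\<Pi>\<^sub>E i\<in>{..<n}. bounded_sum_funs {i<..<n} n)"
  shows "sink_flow n G \<in> kostant_flows n (specialN n)"
proof -
  have vanish: "G i j = 0" if "i < n" "j \<notin> {i<..<n}" for i j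
    using G that by (auto simp: bounded_sum_funs_def)
  have out_le: "(\<Sum>l\<in>{i<..<n}. G i l) \<le> n" if "i < n" for i
    using G that by (auto simp: bounded_sum_funs_def)
  have to_sink: "int (sink_flow n G i n) = n + (\<Sum>k<i. int (G k i)) - (\<Sum>l\<in>{i<..<n}. int (G i l))"
    if "i < n" for i
    using that out_le[OF that] by (simp add: sink_flow_def of_nat_diff flip: of_nat_sum)
  have in_eq: "(\<Sum>k<i. int (G k i)) = (\<Sum>k<n. int (G k i))" if "i < n" for i
    using that vanish by (intro sum.mono_neutral_left) auto
  have out_eq: "(\<Sum>l\<in>{i<..<n}. int (G i l)) = (\<Sum>l<n. int (G i l))" if "i < n" for i
    using that vanish by (intro sum.mono_neutral_left) auto
  have balance:
    "(\<Sum>j\<in>{i<..n}. int (sink_flow n G i j)) - (\<Sum>k<i. int (sink_flow n G k i)) = specialN n i"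
    if "i \<le> n" for i
  proof (cases "i < n")
    case True
    have "{i<..n} = insert n {i<..<n}"
      using True by auto
    then have "(\<Sum>j\<in>{i<..n}. int (sink_flow n G i j))
        = int (sink_flow n G i n) + (\<Sum>j\<in>{i<..<n}. int (G i j))"
      using True by (simp add: sink_flow_def)
    moreover have "(\<Sum>k<i. int (sink_flow n G k i)) = (\<Sum>k<i. int (G k i))"
      using True by (intro sum.cong) (auto simp: sink_flow_def)
    ultimately show ?thesis
      using True to_sink[OF True] by (simp add: specialN_def)
  next
    case False
    then have "i = n"
      using that by simp
    have "(\<Sum>k<n. int (sink_flow n G k n))
        = int n * int n + (\<Sum>k<n. \<Sum>l<n. int (G l k)) - (\<Sum>k<n. \<Sum>l<n. int (G k l))"
      by (simp add: to_sink in_eq out_eq sum.distrib sum_subtractf)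
    also have "(\<Sum>k<n. \<Sum>l<n. int (G l k)) = (\<Sum>k<n. \<Sum>l<n. int (G k l))"
      by (rule sum.swap)
    finally show ?thesis
      using \<open>i = n\<close> by (simp add: specialN_def power2_eq_square)
  qed
  show ?thesis
    unfolding kostant_flows_def using balance by (auto simp: sink_flow_def vanish)
qed

lemma inj_on_sink_flow: "inj_on (sink_flow n) (\<Pi>\<^sub>E i\<in>{..<n}. bounded_sum_funs {i<..<n} n)"
proof (rule inj_onI, rule ext, rule ext)
  fix G H i j
  assume G: "G \<in> (\<Pi>\<^sub>E i\<in>{..<n}. bounded_sum_funs {i<..<n} n)"
    and H: "H \<in> (\<Pi>\<^sub>E i\<in>{..<n}. bounded_sum_funs {i<..<n} n)"
    and eq: "sink_flow n G = sink_flow n H"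
  show "G i j = H i j"
  proof (cases "i < n \<and> j < n")
    case True
    then show ?thesis
      using fun_cong[OF fun_cong[OF eq, of i], of j] by (simp add: sink_flow_def)
  next
    case False
    then show ?thesis
      using G H by (cases "i < n") (auto simp: bounded_sum_funs_def PiE_def extensional_def Pi_def)
  qed
qed

lemma kostant_specialN_ge_prod: "(\<Prod>i<n. (n + i) choose n) \<le> kostant n (specialN n)"
proof -
  have "(\<Prod>i<n. (n + i) choose n) = (\<Prod>i<n. (n + (n - Suc i)) choose n)"
    by (rule prod.nat_diff_reindex[symmetric])
  also have "\<dots> = (\<Prod>i<n. card (bounded_sum_funs {i<..<n} n))"
    by (intro prod.cong) (simp_all add: card_bounded_sum_funs)
  also have "\<dots> = card (sink_flow n ` (\<Pi>\<^sub>E i\<in>{..<n}. bounded_sum_funs {i<..<n} n))"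
    by (simp add: card_image[OF inj_on_sink_flow] card_PiE)
  also have "\<dots> \<le> kostant n (specialN n)"
    unfolding kostant_eq_card_kostant_flows
    by (intro card_mono finite_kostant_flows image_subsetI sink_flow_in_kostant_flows)
  finally show ?thesis .
qed

lemma binomial_mult_fact: "((n + a) choose n) * fact n = (\<Prod>k<n. a + k + 1)"
proof (induction n)
  case (Suc n)
  have "Suc n * ((Suc n + a) choose Suc n) = (Suc n + a) * ((n + a) choose n)"
    using Suc_times_binomial[of n "n + a"] by simp
  then have "((Suc n + a) choose Suc n) * fact (Suc n) = (Suc n + a) * (((n + a) choose n) * fact n)"
    by (simp only: fact_Suc of_nat_id mult_ac)
  also have "\<dots> = (\<Prod>k<Suc n. a + k + 1)"
    by (simp add: Suc.IH)
  finally show ?case .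
qed simp

lemma binomial_add_le_mult: "(n + (a + b)) choose n \<le> ((n + a) choose n) * ((n + b) choose n)"
proof -
  have fact: "fact n = (\<Prod>k<n. k + 1)"
    using binomial_mult_fact[of n 0] by simp
  have "((n + (a + b)) choose n) * fact n * fact n = (\<Prod>k<n. (a + b + k + 1) * (k + 1))"
    by (simp only: binomial_mult_fact) (simp only: fact prod.distrib)
  also have "\<dots> \<le> (\<Prod>k<n. (a + k + 1) * (b + k + 1))"
    by (intro prod_mono) (simp add: algebra_simps)
  also have "\<dots> = (((n + a) choose n) * fact n) * (((n + b) choose n) * fact n)"
    by (simp only: binomial_mult_fact prod.distrib)
  finally have "((n + (a + b)) choose n) * (fact n * fact n)
      \<le> (((n + a) choose n) * ((n + b) choose n)) * (fact n * fact n)"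
    by (simp only: mult_ac)
  then show ?thesis
    by simp
qed

lemma central_binomial_pred_lower_bound:
  assumes "1 \<le> n"
  shows "4 ^ n / (4 * real n) \<le> real ((n + (n - 1)) choose n)"
proof -
  have "2 * n - n = n" "2 * n - 1 = n + (n - 1)"
    using assms by simp_all
  then have "n * ((2 * n) choose n) = n * (2 * ((n + (n - 1)) choose n))"
    using binomial_absorb_comp[of "2 * n" n] by (simp only: mult_ac)
  then have "(2 * n) choose n = 2 * ((n + (n - 1)) choose n)"
    using assms by simp
  then show ?thesis
    using central_binomial_lower_bound[of n] assms by (simp add: field_simps)
qed

lemma ln_kostant_specialN_ge:
  assumes n: "1 \<le> n"
  shows "real n ^ 2 * ln 2 - real n * ln 2 - real n * ln (real n) / 2 \<le> ln (kostant n (specialN n))"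
proof -
  define P where "P = (\<Prod>i<n. (n + i) choose n)"
  define c where "c = (n + (n - 1)) choose n"
  have "c ^ n = (\<Prod>i<n. c)"
    by simp
  also have "\<dots> \<le> (\<Prod>i<n. ((n + i) choose n) * ((n + (n - Suc i)) choose n))"
  proof (intro prod_mono conjI)
    fix i assume "i \<in> {..<n}"
    then have "c = (n + (i + (n - Suc i))) choose n"
      by (simp add: c_def)
    then show "c \<le> ((n + i) choose n) * ((n + (n - Suc i)) choose n)"
      using binomial_add_le_mult by simp
  qed simp
  also have "\<dots> = P * P"
    by (simp only: P_def prod.distrib prod.nat_diff_reindex[where g = "\<lambda>i. (n + i) choose n"])
  finally have "real c ^ n \<le> real P * real P"
    by (metis of_nat_le_iff of_nat_mult of_nat_power)
  moreover have c: "4 ^ n / (4 * real n) \<le> real c"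
    unfolding c_def using n by (rule central_binomial_pred_lower_bound)
  moreover have "0 < real P"
    by (simp add: P_def prod_pos)
  moreover have "0 < real c"
    by (rule less_le_trans[OF _ c]) (use n in simp)
  ultimately have Pc: "real n * ln (real c) \<le> 2 * ln (real P)"
    using ln_le_cancel_iff[of "real c ^ n" "real P * real P"] n
    by (simp add: ln_realpow ln_mult)
  have "real n * ln 4 - ln 4 - ln (real n) \<le> ln (real c)"
    using ln_le_cancel_iff[of "4 ^ n / (4 * real n)" "real c"] c n \<open>0 < real c\<close>
    by (simp add: ln_div ln_mult ln_realpow)
  have "2 * (real n ^ 2 * ln 2 - real n * ln 2 - real n * ln (real n) / 2)
      = real n * (real n * ln 4 - ln 4 - ln (real n))"
    using ln_realpow[of 2 2] by (simp add: algebra_simps power2_eq_square)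
  also have "\<dots> \<le> real n * ln (real c)"
    by (intro mult_left_mono \<open>real n * ln 4 - ln 4 - ln (real n) \<le> ln (real c)\<close>) simp
  also have "\<dots> \<le> 2 * ln (real P)"
    by (rule Pc)
  also have "\<dots> \<le> 2 * ln (kostant n (specialN n))"
    using kostant_specialN_ge_prod[of n, folded P_def] \<open>0 < real P\<close> by (simp add: ln_mono)
  finally show ?thesis
    by simp
qed

section \<open>Asymptotics\<close>

lemma ln_2_ln_3_ge: "63 / 50 \<le> 9 * ln 2 - 9 / 2 * ln (3 :: real)"
proof -
  have "exp (7 :: real) = exp 1 ^ 7"
    by (simp flip: exp_of_nat_mult)
  also have "\<dots> \<le> (272 / 100) ^ 7"
    using e_less_272 by (intro power_mono) auto
  also have "\<dots> \<le> (4 / 3 :: real) ^ 25"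
    by (simp add: power_divide divide_simps)
  finally have "7 \<le> ln ((4 / 3 :: real) ^ 25)"
    by (simp add: ln_ge_iff)
  also have "\<dots> = 25 * (2 * ln 2 - ln 3)"
    using ln_realpow[of 2 2] by (simp add: ln_realpow ln_div)
  finally show ?thesis
    by simp
qed

lemma eventually_ln_kostant_specialN_le:
  "\<forall>\<^sub>F n in at_top. ln (kostant n (specialN n)) \<le> 63 / 50 * (real n)\<^sup>2"
proof -
  have "\<forall>\<^sub>F n in at_top. 3 / 4 * (real n + 1) * (real n + 2) + real n * (real n + 1) / 2
      + (real n + 1) * ln (2 * (real n + 1)) \<le> 63 / 50 * (real n)\<^sup>2"
    by real_asymp
  then show ?thesis
    by eventually_elim (use ln_kostant_specialN_le in \<open>rule order_trans\<close>)
qed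

theorem corollary2p22:
  shows "(\<exists>C. eventually (\<lambda>n. ln (real (kostant n (specialN n)))
             \<le> (real n)^2 * (9 * ln 2 - 9/2 * ln 3) + C * real n * ln (real n)) at_top)
       \<and> (\<exists>D. eventually (\<lambda>n. ln (real (kostant n (specialN n)))
             \<ge> (real n)^2 * ln 2 - 3/2 * real n * ln (real n) - D * real n) at_top)"
proof (intro conjI exI)
  show "\<forall>\<^sub>F n in at_top. ln (real (kostant n (specialN n)))
      \<le> (real n)\<^sup>2 * (9 * ln 2 - 9 / 2 * ln 3) + 0 * real n * ln (real n)"
    using eventually_ln_kostant_specialN_le
  proof eventually_elim
    case (elim n)
    then show ?case
      using mult_right_mono[OF ln_2_ln_3_ge, of "(real n)\<^sup>2"] by (simp add: mult.commute)
  qed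
  show "\<forall>\<^sub>F n in at_top. (real n)\<^sup>2 * ln 2 - 3 / 2 * real n * ln (real n) - 1 * real n
      \<le> ln (real (kostant n (specialN n)))"
    using eventually_ge_at_top[of 1]
  proof eventually_elim
    case (elim n)
    have "real n * ln 2 \<le> real n"
      using ln_2_less_1 by (simp add: mult_left_le)
    moreover have "0 \<le> real n * ln (real n)"
      using elim by simp
    ultimately show ?case
      using ln_kostant_specialN_ge[OF elim] by simp
  qed
qed

end
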